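(* Let $b\in\mathbb{R}$ and $\varepsilon_0\in(0,1)$ be such that $\det\Delta_\varepsilon(s)\ne0$ for all $\varepsilon\in[0,\varepsilon_0]$ and all $s$ on the line $\Sigma=\{b+iy:y\in\mathbb{R}\}$. Then there is $\varepsilon_1\in(0,\varepsilon_0]$ such that $$\sup\{|s|\,\|\Delta_\varepsilon(s)^{-1}\|:0\le\varepsilon\le\varepsilon_1,\ s\in\Sigma\}<\infty\quad\text{and}\quad \sup\{|s|\,\|D_\varepsilon(s)^{-1}\|:0<\varepsilon\le\varepsilon_1,\ s\in\Sigma\}<\infty.$$
   Context: $L:C([-\tau,0];\mathbb{R}^N)\to\mathbb{R}^N$ is a bounded linear operator; $L(e^{s\cdot}I)$ is the complex $N\times N$ matrix whose $j$-th column is $L$ applied to $\theta\mapsto e^{s\theta}e_j$. $\Delta_\varepsilon(s)=\varepsilon^2s^2I-sI+L(e^{s\cdot}I)$, and for $\varepsilon>0$, $D_\varepsilon(s)$ is the $2N\times2N$ block matrix $\begin{pmatrix}sI&-I\\ \varepsilon^{-2}L(e^{s\cdot}I)&(s-\varepsilon^{-2})I\end{pmatrix}$ (the characteristic matrix of the first-order system equivalent to $\varepsilon^2x''-x'+Lx_t=0$), $I$ the $N\times N$ identity. *)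

theory Defs
  imports "HOL-Analysis.Analysis"
begin

text \<open>Elements of C([-tau,0]; R^N) are represented by functions real => real^'n that are
  continuous on {-tau..0}; the sup norm is SUP over {-tau..0}.\<close>
definition delay_operator :: "real \<Rightarrow> ((real \<Rightarrow> real^'n) \<Rightarrow> real^'n) \<Rightarrow> bool" where
  "delay_operator tau L \<longleftrightarrow>
     (\<forall>\<phi> \<psi>. continuous_on {-tau..0} \<phi> \<longrightarrow> continuous_on {-tau..0} \<psi> \<longrightarrow>
        L (\<lambda>\<theta>. \<phi> \<theta> + \<psi> \<theta>) = L \<phi> + L \<psi>) \<and>
     (\<forall>c \<phi>. continuous_on {-tau..0} \<phi> \<longrightarrow> L (\<lambda>\<theta>. c *\<^sub>R \<phi> \<theta>) = c *\<^sub>R L \<phi>) \<and>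
     (\<exists>C. \<forall>\<phi>. continuous_on {-tau..0} \<phi> \<longrightarrow>
        norm (L \<phi>) \<le> C * (SUP \<theta>\<in>{-tau..0}. norm (\<phi> \<theta>)))"

text \<open>L(e^{s.} I): column j is (the complexification of) L applied to theta -> e^{s theta} e_j.\<close>
definition charM :: "((real \<Rightarrow> real^'n) \<Rightarrow> real^'n) \<Rightarrow> complex \<Rightarrow> complex^'n^'n" where
  "charM L s = (\<chi> k j. Complex ((L (\<lambda>\<theta>. Re (exp (s * of_real \<theta>)) *\<^sub>R axis j 1)) $ k)
                                 ((L (\<lambda>\<theta>. Im (exp (s * of_real \<theta>)) *\<^sub>R axis j 1)) $ k))"

definition Delta :: "((real \<Rightarrow> real^'n) \<Rightarrow> real^'n) \<Rightarrow> real \<Rightarrow> complex \<Rightarrow> complex^'n^'n" where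
  "Delta L eps s = (\<chi> k j. (if k = j then (of_real eps)^2 * s^2 - s else 0) + charM L s $ k $ j)"

text \<open>D_eps(s) = [[s I, -I], [eps^-2 L(e^{s.} I), (s - eps^-2) I]], indexed by 'n + 'n
  (Inl = first block, Inr = second block).\<close>
definition Dmat :: "((real \<Rightarrow> real^'n) \<Rightarrow> real^'n) \<Rightarrow> real \<Rightarrow> complex \<Rightarrow> complex^('n + 'n)^('n + 'n)" where
  "Dmat L eps s = (\<chi> p q. case (p, q) of
      (Inl k, Inl j) \<Rightarrow> (if k = j then s else 0)
    | (Inl k, Inr j) \<Rightarrow> (if k = j then -1 else 0)
    | (Inr k, Inl j) \<Rightarrow> charM L s $ k $ j / (of_real eps)^2
    | (Inr k, Inr j) \<Rightarrow> (if k = j then s - 1 / (of_real eps)^2 else 0))"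

definition mnorm :: "complex^'m^'n \<Rightarrow> real" where
  "mnorm A = onorm (\<lambda>x. A *v x)"

end

theory Submission
  imports Defs
begin

text \<open>
  Write \<open>s = b + iy\<close> and \<open>M(s) = L(e\<^sup>s\<^sup>\<cdot>I)\<close>, so that \<open>\<Delta>\<^sub>\<epsilon>(s) = s(\<epsilon>\<^sup>2s - 1)I + M(s)\<close>.
  Along the line, \<open>M\<close> is bounded and continuous in \<open>y\<close> (the profiles \<open>\<theta> \<mapsto> e\<^sup>s\<^sup>\<theta>\<close> on
  \<open>[-\<tau>,0]\<close> are bounded and Lipschitz in \<open>y\<close>), and once \<open>\<epsilon>\<^sup>2b \<le> 1/2\<close> the factor \<open>\<epsilon>\<^sup>2s - 1\<close>
  has modulus at least \<open>1/2\<close>. This gives \<open>|s(\<epsilon>\<^sup>2s - 1)| |x| \<le> B |\<Delta>\<^sub>\<epsilon>(s) x|\<close> uniformly: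
  for large \<open>|s|\<close> the scalar part dominates \<open>M\<close>, and on the compact set
  \<open>\<epsilon> \<in> [0,\<epsilon>\<^sub>1]\<close>, \<open>|y| \<le> R\<close>, \<open>|x| = 1\<close> the continuous function \<open>|\<Delta>\<^sub>\<epsilon>(s) x|\<close> has a positive
  minimum because \<open>det \<Delta>\<^sub>\<epsilon>(s) \<noteq> 0\<close>. For \<open>D\<^sub>\<epsilon>\<close>, if \<open>D\<^sub>\<epsilon>(s)(u,v) = (f,g)\<close> then
  eliminating blocks gives \<open>\<Delta>\<^sub>\<epsilon>(s) u = \<epsilon>\<^sup>2g + (\<epsilon>\<^sup>2s - 1) f\<close> and
  \<open>\<Delta>\<^sub>\<epsilon>(s) v = s\<epsilon>\<^sup>2g - M(s) f\<close>, and the factor \<open>\<epsilon>\<^sup>2s - 1\<close> in the bound for \<open>\<Delta>\<^sub>\<epsilon>\<close>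
  absorbs the growth of the right-hand sides.\<close>

lemma lipschitz_on_sin: "1-lipschitz_on UNIV (sin :: real \<Rightarrow> real)"
proof (rule lipschitz_onI)
  fix a c :: real
  have "\<bar>sin a - sin c\<bar> = 2 * \<bar>sin ((a - c) / 2)\<bar> * \<bar>cos ((a + c) / 2)\<bar>"
    by (simp add: sin_diff_sin abs_mult)
  also have "\<dots> \<le> 2 * \<bar>(a - c) / 2\<bar> * 1"
    by (intro mult_mono abs_sin_x_le_abs_x abs_cos_le_one) auto
  finally show "dist (sin a) (sin c) \<le> 1 * dist a c"
    by (simp add: dist_real_def)
qed simp

lemma lipschitz_on_cos: "1-lipschitz_on UNIV (cos :: real \<Rightarrow> real)"
proof (rule lipschitz_onI)
  fix a c :: real
  have "\<bar>cos a - cos c\<bar> = 2 * \<bar>sin ((a + c) / 2)\<bar> * \<bar>sin ((c - a) / 2)\<bar>"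
    by (simp add: cos_diff_cos abs_mult)
  also have "\<dots> \<le> 2 * 1 * \<bar>(c - a) / 2\<bar>"
    by (intro mult_mono abs_sin_x_le_abs_x abs_sin_le_one) auto
  finally show "dist (cos a) (cos c) \<le> 1 * dist a c"
    by (simp add: dist_real_def)
qed simp

lemma cmod_Complex_components_le:
  "cmod (Complex (u $ k) (v $ k)) \<le> norm u + norm (v :: real^'n)"
  using cmod_le[of "Complex (u $ k) (v $ k)"] component_le_norm_cart[of u k] component_le_norm_cart[of v k]
  by simp

lemma norm_vector_scalar_mult: "norm (c *s x) = norm c * norm (x :: 'a::real_normed_div_algebra^'n)"
  unfolding norm_vec_def vector_scalar_mult_def by (simp add: L2_set_right_distrib norm_mult)

lemma norm_vector_scalar_mult_add_le:
  "norm (a *s x + c *s (z :: 'a::real_normed_div_algebra^'n)) \<le> norm a * norm x + norm c * norm z"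
  using norm_triangle_ineq[of "a *s x" "c *s z"] by (simp add: norm_vector_scalar_mult)

lemma norm_matrix_vector_mult_le:
  fixes M :: "complex^'m^'k"
  assumes "\<And>k j. cmod (M $ k $ j) \<le> C"
  shows "norm (M *v x) \<le> (real CARD('k) * real CARD('m) * C) * norm x"
proof -
  have entry: "cmod ((M *v x) $ k) \<le> real CARD('m) * C * norm x" for k
  proof -
    have "cmod ((M *v x) $ k) \<le> (\<Sum>j\<in>UNIV. cmod (M $ k $ j * x $ j))"
      unfolding matrix_vector_mult_def by (simp add: norm_sum)
    also have "\<dots> \<le> (\<Sum>j\<in>(UNIV::'m set). C * norm x)"
      using assms order_trans[OF norm_ge_zero assms]
      unfolding norm_mult by (intro sum_mono mult_mono Finite_Cartesian_Product.norm_nth_le) auto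
    finally show ?thesis by simp
  qed
  have "norm (M *v x) \<le> (\<Sum>k\<in>UNIV. cmod ((M *v x) $ k))"
    unfolding norm_vec_def by (rule L2_set_le_sum) simp
  also have "\<dots> \<le> (\<Sum>k\<in>(UNIV::'k set). real CARD('m) * C * norm x)"
    by (intro sum_mono entry)
  finally show ?thesis by simp
qed

lemma matrix_vector_mult_matrix_inv:
  fixes A :: "'a::comm_semiring_1^'n^'m"
  assumes "invertible A"
  shows "A *v (matrix_inv A *v y) = y"
proof -
  have "A ** matrix_inv A = mat 1"
    using assms unfolding invertible_def matrix_inv_def by (rule someI2_ex) auto
  then show ?thesis by (simp add: matrix_vector_mul_assoc)
qed

lemma invertible_if_norm_lower_bound:
  fixes A :: "complex^'m^'m"
  assumes "c > 0" "\<And>x. c * norm x \<le> norm (A *v x)"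
  shows "invertible A"
proof -
  have "x = 0" if "A *v x = 0" for x
    using assms(2)[of x] that assms(1) by (simp add: mult_le_0_iff)
  then show ?thesis
    unfolding invertible_left_inverse matrix_left_invertible_ker by blast
qed

lemma scaled_mnorm_le:
  fixes A :: "complex^'m^'k"
  assumes "a \<ge> 0" "C \<ge> 0" "\<And>y. a * norm (A *v y) \<le> C * norm y"
  shows "a * mnorm A \<le> C"
proof (cases "a = 0")
  case False
  with assms(1) have a: "a > 0" by simp
  have "mnorm A \<le> C / a" unfolding mnorm_def
  proof (rule onorm_bound)
    show "0 \<le> C / a" using a assms(2) by simp
    show "norm (A *v y) \<le> C / a * norm y" for y
      using assms(3)[of y] a by (simp add: field_simps)
  qed
  then show ?thesis using a by (simp add: field_simps)
qed (use assms in simp)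

lemma scaled_mnorm_matrix_inv_le:
  fixes A :: "complex^'m^'m"
  assumes "invertible A" "a \<ge> 0" "C \<ge> 0" "\<And>x. a * norm x \<le> C * norm (A *v x)"
  shows "a * mnorm (matrix_inv A) \<le> C"
  using assms(2,3) assms(4)[of "matrix_inv A *v _"]
  by (intro scaled_mnorm_le) (simp_all add: matrix_vector_mult_matrix_inv[OF assms(1)])

definition fst_block :: "'a^('n::finite + 'n) \<Rightarrow> 'a^'n" where
  "fst_block w = (\<chi> k. w $ Inl k)"

definition snd_block :: "'a^('n::finite + 'n) \<Rightarrow> 'a^'n" where
  "snd_block w = (\<chi> k. w $ Inr k)"

lemma sum_UNIV_Plus:
  "(\<Sum>p\<in>(UNIV :: ('a::finite + 'b::finite) set). f p) = (\<Sum>k\<in>UNIV. f (Inl k)) + (\<Sum>k\<in>UNIV. f (Inr k))"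
  by (subst UNIV_Plus_UNIV[symmetric], subst sum.Plus) (auto simp: o_def)

lemma norm_blocks:
  fixes w :: "'a::real_normed_vector^('n::finite + 'n)"
  shows "norm w = sqrt ((norm (fst_block w))\<^sup>2 + (norm (snd_block w))\<^sup>2)"
  unfolding norm_vec_def L2_set_def fst_block_def snd_block_def
  by (simp add: sum_UNIV_Plus sum_nonneg)

lemma norm_le_norm_blocks:
  "norm (w :: 'a::real_normed_vector^('n::finite + 'n)) \<le> norm (fst_block w) + norm (snd_block w)"
  using sqrt_sum_squares_le_sum_abs[of "norm (fst_block w)" "norm (snd_block w)"]
  unfolding norm_blocks by simp

lemma norm_fst_block_le: "norm (fst_block (w :: 'a::real_normed_vector^('n::finite + 'n))) \<le> norm w"
  unfolding norm_blocks[of w] by (rule real_le_rsqrt) simp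

lemma norm_snd_block_le: "norm (snd_block (w :: 'a::real_normed_vector^('n::finite + 'n))) \<le> norm w"
  unfolding norm_blocks[of w] by (rule real_le_rsqrt) simp

section \<open>The characteristic matrix along a vertical line\<close>

lemma delay_operator_diff:
  assumes "delay_operator tau L" "continuous_on {-tau..0} \<phi>" "continuous_on {-tau..0} \<psi>"
  shows "L (\<lambda>\<theta>. \<phi> \<theta> - \<psi> \<theta>) = L \<phi> - L \<psi>"
proof -
  have "continuous_on {-tau..0} (\<lambda>\<theta>. \<phi> \<theta> - \<psi> \<theta>)"
    using assms(2,3) by (intro continuous_intros)
  then have "L (\<lambda>\<theta>. (\<phi> \<theta> - \<psi> \<theta>) + \<psi> \<theta>) = L (\<lambda>\<theta>. \<phi> \<theta> - \<psi> \<theta>) + L \<psi>"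
    using assms(1,3) unfolding delay_operator_def by blast
  then show ?thesis by simp
qed

lemma delay_operator_norm_le:
  assumes "delay_operator tau L" "tau > 0"
  obtains C where "C \<ge> 0"
    "\<And>\<phi> a. continuous_on {-tau..0} \<phi> \<Longrightarrow> (\<And>\<theta>. \<theta> \<in> {-tau..0} \<Longrightarrow> norm (\<phi> \<theta>) \<le> a)
       \<Longrightarrow> norm (L \<phi>) \<le> C * a"
proof -
  obtain C where C: "\<And>\<phi>. continuous_on {-tau..0} \<phi> \<Longrightarrow>
      norm (L \<phi>) \<le> C * (SUP \<theta>\<in>{-tau..0}. norm (\<phi> \<theta>))"
    using assms(1) unfolding delay_operator_def by blast
  have "norm (L \<phi>) \<le> max C 0 * a"
    if \<phi>: "continuous_on {-tau..0} \<phi>" and a: "\<And>\<theta>. \<theta> \<in> {-tau..0} \<Longrightarrow> norm (\<phi> \<theta>) \<le> a" for \<phi> a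
  proof -
    have "bdd_above ((\<lambda>\<theta>. norm (\<phi> \<theta>)) ` {-tau..0})"
      using a by (intro bdd_aboveI2[where M = a]) auto
    then have "norm (\<phi> 0) \<le> (SUP \<theta>\<in>{-tau..0}. norm (\<phi> \<theta>))"
      using assms(2) by (intro cSUP_upper) auto
    then have sup_nonneg: "0 \<le> (SUP \<theta>\<in>{-tau..0}. norm (\<phi> \<theta>))"
      by (rule order_trans[OF norm_ge_zero])
    have sup_le: "(SUP \<theta>\<in>{-tau..0}. norm (\<phi> \<theta>)) \<le> a"
      using assms(2) a by (intro cSUP_least) auto
    have "norm (L \<phi>) \<le> C * (SUP \<theta>\<in>{-tau..0}. norm (\<phi> \<theta>))" using C \<phi> .
    also have "\<dots> \<le> max C 0 * (SUP \<theta>\<in>{-tau..0}. norm (\<phi> \<theta>))"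
      using sup_nonneg by (intro mult_right_mono) auto
    also have "\<dots> \<le> max C 0 * a" using sup_le by (intro mult_left_mono) auto
    finally show ?thesis .
  qed
  then show ?thesis using that[of "max C 0"] by simp
qed

definition exp_profile :: "real \<Rightarrow> (real \<Rightarrow> real) \<Rightarrow> real \<Rightarrow> 'n::finite \<Rightarrow> real \<Rightarrow> real^'n" where
  "exp_profile b f y j \<theta> = (exp (b * \<theta>) * f (y * \<theta>)) *\<^sub>R axis j 1"

lemma exp_le_on_delay_interval:
  fixes b tau \<theta> :: real
  assumes "\<theta> \<in> {-tau..0}"
  shows "exp (b * \<theta>) \<le> exp (\<bar>b\<bar> * tau)"
proof -
  have "b * \<theta> \<le> \<bar>b\<bar> * \<bar>\<theta>\<bar>" by (metis abs_ge_self abs_mult)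
  also have "\<dots> \<le> \<bar>b\<bar> * tau" using assms by (intro mult_left_mono) auto
  finally show ?thesis by simp
qed

lemma continuous_on_exp_profile:
  assumes "continuous_on UNIV f"
  shows "continuous_on S (exp_profile b f y j)"
proof -
  have "continuous_on S (\<lambda>\<theta>. f (y * \<theta>))"
    by (rule continuous_on_compose2[OF assms]) (auto intro: continuous_intros)
  then show ?thesis unfolding exp_profile_def by (intro continuous_intros)
qed

lemma norm_exp_profile_le:
  assumes "\<And>x. \<bar>f x\<bar> \<le> 1" "\<theta> \<in> {-tau..0}"
  shows "norm (exp_profile b f y j \<theta>) \<le> exp (\<bar>b\<bar> * tau)"
proof -
  have "exp (b * \<theta>) * \<bar>f (y * \<theta>)\<bar> \<le> exp (\<bar>b\<bar> * tau) * 1"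
    using exp_le_on_delay_interval[OF assms(2)] assms(1) by (intro mult_mono) auto
  then show ?thesis by (simp add: exp_profile_def abs_mult)
qed

lemma norm_exp_profile_diff_le:
  assumes "1-lipschitz_on UNIV f" "\<theta> \<in> {-tau..0}"
  shows "norm (exp_profile b f y j \<theta> - exp_profile b f y' j \<theta>) \<le> exp (\<bar>b\<bar> * tau) * tau * \<bar>y - y'\<bar>"
proof -
  have "\<bar>f (y * \<theta>) - f (y' * \<theta>)\<bar> \<le> \<bar>y * \<theta> - y' * \<theta>\<bar>"
    using lipschitz_onD[OF assms(1)] by (simp add: dist_real_def)
  also have "\<dots> = \<bar>\<theta>\<bar> * \<bar>y - y'\<bar>" by (simp add: abs_mult left_diff_distrib[symmetric])
  also have "\<dots> \<le> tau * \<bar>y - y'\<bar>" using assms(2) by (intro mult_right_mono) auto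
  finally have "exp (b * \<theta>) * \<bar>f (y * \<theta>) - f (y' * \<theta>)\<bar> \<le> exp (\<bar>b\<bar> * tau) * (tau * \<bar>y - y'\<bar>)"
    using exp_le_on_delay_interval[OF assms(2)] by (intro mult_mono) auto
  then show ?thesis
    by (simp add: exp_profile_def scaleR_diff_left[symmetric] abs_mult right_diff_distrib[symmetric] mult.assoc)
qed

lemma delay_operator_exp_profile:
  fixes L :: "(real \<Rightarrow> real^'n) \<Rightarrow> real^'n"
  assumes "delay_operator tau L" "tau > 0"
  obtains C where
    "\<And>f y j. 1-lipschitz_on UNIV (f :: real \<Rightarrow> real) \<Longrightarrow> (\<And>x. \<bar>f x\<bar> \<le> 1) \<Longrightarrow>
       norm (L (exp_profile b f y j)) \<le> C"
    "\<And>f y y' j. 1-lipschitz_on UNIV (f :: real \<Rightarrow> real) \<Longrightarrow>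
       norm (L (exp_profile b f y j) - L (exp_profile b f y' j)) \<le> C * \<bar>y - y'\<bar>"
proof -
  obtain C where C0: "C \<ge> 0" and C: "\<And>\<phi> a. continuous_on {-tau..0} \<phi> \<Longrightarrow>
      (\<And>\<theta>. \<theta> \<in> {-tau..0} \<Longrightarrow> norm (\<phi> \<theta>) \<le> a) \<Longrightarrow> norm (L \<phi>) \<le> C * a"
    using delay_operator_norm_le[OF assms] by blast
  define E where "E = exp (\<bar>b\<bar> * tau)"
  have E0: "E > 0" unfolding E_def by simp
  have cont: "continuous_on {-tau..0} (exp_profile b f y j)" if "1-lipschitz_on UNIV f" for f y j
    using continuous_on_exp_profile[OF lipschitz_on_continuous_on[OF that]] .
  show ?thesis
  proof (rule that[of "C * E * (1 + tau)"])
    fix f :: "real \<Rightarrow> real" and y j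
    assume f: "1-lipschitz_on UNIV f" and f_bound: "\<And>x. \<bar>f x\<bar> \<le> 1"
    have "norm (L (exp_profile b f y j)) \<le> C * E"
      unfolding E_def by (rule C[OF cont[OF f] norm_exp_profile_le[OF f_bound]])
    then show "norm (L (exp_profile b f y j)) \<le> C * E * (1 + tau)"
      using mult_left_mono[of 1 "1 + tau" "C * E"] C0 E0 assms(2) by simp
  next
    fix f :: "real \<Rightarrow> real" and y y' j assume f: "1-lipschitz_on UNIV f"
    have "norm (L (\<lambda>\<theta>. exp_profile b f y j \<theta> - exp_profile b f y' j \<theta>)) \<le> C * (E * tau * \<bar>y - y'\<bar>)"
      unfolding E_def
      by (rule C[OF continuous_on_diff[OF cont[OF f] cont[OF f]] norm_exp_profile_diff_le[OF f]])
    then have "norm (L (exp_profile b f y j) - L (exp_profile b f y' j)) \<le> C * E * tau * \<bar>y - y'\<bar>"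
      using delay_operator_diff[OF assms(1) cont[OF f] cont[OF f]] by (simp add: mult.assoc)
    then show "norm (L (exp_profile b f y j) - L (exp_profile b f y' j)) \<le> C * E * (1 + tau) * \<bar>y - y'\<bar>"
      using mult_left_mono[of tau "1 + tau" "C * E * \<bar>y - y'\<bar>"] C0 E0 by (simp add: mult_ac)
  qed
qed

lemma charM_line_entry:
  "charM L (Complex b y) $ k $ j = Complex (L (exp_profile b cos y j) $ k) (L (exp_profile b sin y j) $ k)"
proof -
  have "Complex b y * complex_of_real \<theta> = Complex (b * \<theta>) (y * \<theta>)" for \<theta>
    by (simp add: complex_eq_iff)
  then show ?thesis
    unfolding charM_def exp_profile_def by (simp only: Re_exp Im_exp complex.sel vec_lambda_beta)
qed

lemma charM_line_bounded_continuous: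
  fixes L :: "(real \<Rightarrow> real^'n) \<Rightarrow> real^'n"
  assumes "delay_operator tau L" "tau > 0"
  obtains K where "K \<ge> 0" "\<And>s x. Re s = b \<Longrightarrow> norm (charM L s *v x) \<le> K * norm x"
    "\<And>k j. continuous_on UNIV (\<lambda>y. charM L (Complex b y) $ k $ j)"
proof (rule delay_operator_exp_profile[OF assms, where b = b])
  fix C
  assume bound: "\<And>f y j. 1-lipschitz_on UNIV (f :: real \<Rightarrow> real) \<Longrightarrow> (\<And>x. \<bar>f x\<bar> \<le> 1) \<Longrightarrow>
       norm (L (exp_profile b f y j)) \<le> C"
    and lipschitz: "\<And>f y y' j. 1-lipschitz_on UNIV (f :: real \<Rightarrow> real) \<Longrightarrow>
       norm (L (exp_profile b f y j) - L (exp_profile b f y' j)) \<le> C * \<bar>y - y'\<bar>"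
  have entry_le: "cmod (charM L (Complex b y) $ k $ j) \<le> 2 * C" for y k j
  proof -
    have "norm (L (exp_profile b cos y j)) \<le> C"
      by (rule bound) (rule lipschitz_on_cos, rule abs_cos_le_one)
    moreover have "norm (L (exp_profile b sin y j)) \<le> C"
      by (rule bound) (rule lipschitz_on_sin, rule abs_sin_le_one)
    ultimately show ?thesis
      unfolding charM_line_entry
      using cmod_Complex_components_le[of "L (exp_profile b cos y j)" k "L (exp_profile b sin y j)"]
      by linarith
  qed
  have C0: "0 \<le> 2 * C" using order_trans[OF norm_ge_zero entry_le] .
  have entry_lipschitz: "(2 * C)-lipschitz_on UNIV (\<lambda>y. charM L (Complex b y) $ k $ j)" for k j
  proof (rule lipschitz_onI[OF _ C0])
    fix y y' :: real
    have "dist (charM L (Complex b y) $ k $ j) (charM L (Complex b y') $ k $ j)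
      = cmod (Complex ((L (exp_profile b cos y j) - L (exp_profile b cos y' j)) $ k)
                      ((L (exp_profile b sin y j) - L (exp_profile b sin y' j)) $ k))"
      unfolding charM_line_entry dist_norm complex_diff by simp
    also have "\<dots> \<le> norm (L (exp_profile b cos y j) - L (exp_profile b cos y' j))
                  + norm (L (exp_profile b sin y j) - L (exp_profile b sin y' j))"
      by (rule cmod_Complex_components_le)
    also have "\<dots> \<le> C * \<bar>y - y'\<bar> + C * \<bar>y - y'\<bar>"
      by (intro add_mono lipschitz lipschitz_on_cos lipschitz_on_sin)
    finally show "dist (charM L (Complex b y) $ k $ j) (charM L (Complex b y') $ k $ j) \<le> 2 * C * dist y y'"
      by (simp add: dist_real_def)
  qed
  have "norm (charM L s *v x) \<le> real CARD('n) * real CARD('n) * (2 * C) * norm x" if "Re s = b" for s x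
    using norm_matrix_vector_mult_le[OF entry_le, of "Im s"] that complex.collapse[of s] by simp
  moreover have "0 \<le> real CARD('n) * real CARD('n) * (2 * C)" using C0 by simp
  ultimately show thesis
    using that lipschitz_on_continuous_on[OF entry_lipschitz] by blast
qed

section \<open>Uniform lower bound for \<open>\<Delta>\<^sub>\<epsilon>\<close>\<close>

lemma small_eps_exists:
  fixes b eps0 :: real
  assumes "0 < eps0"
  obtains e where "0 < e" "e \<le> eps0" "e^2 * b \<le> 1/2"
proof -
  define e where "e = min (min eps0 1) (1 / (2 * \<bar>b\<bar> + 2))"
  have e: "0 < e" "e \<le> eps0" "e \<le> 1" unfolding e_def using assms by auto
  have "e^2 \<le> e" using mult_left_mono[OF e(3), of e] e(1) by (simp add: power2_eq_square)
  have "e^2 * b \<le> e^2 * \<bar>b\<bar>" by (intro mult_left_mono) auto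
  also have "\<dots> \<le> e * \<bar>b\<bar>" using \<open>e^2 \<le> e\<close> by (intro mult_right_mono) auto
  also have "\<dots> \<le> 1 / (2 * \<bar>b\<bar> + 2) * \<bar>b\<bar>"
    unfolding e_def by (intro mult_right_mono) auto
  also have "\<dots> \<le> 1/2" by (simp add: field_simps)
  finally show ?thesis using e that by blast
qed

lemma norm_eps_sq_mult_minus_one_ge:
  assumes "0 \<le> eps" "eps \<le> e" "e^2 * Re s \<le> 1/2"
  shows "1/2 \<le> cmod (of_real eps^2 * s - 1)"
proof -
  have "eps^2 * Re s \<le> 1/2"
  proof (cases "Re s \<le> 0")
    case False
    have "eps^2 \<le> e^2" using assms(1,2) by (intro power_mono)
    then have "eps^2 * Re s \<le> e^2 * Re s" using False by (intro mult_right_mono) auto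
    then show ?thesis using assms(3) by linarith
  next
    case True
    then have "eps^2 * Re s \<le> 0" by (simp add: mult_nonneg_nonpos)
    then show ?thesis by simp
  qed
  then have "1/2 \<le> \<bar>Re (of_real eps^2 * s - 1)\<bar>"
    by (simp flip: of_real_power)
  also have "\<dots> \<le> cmod (of_real eps^2 * s - 1)" by (rule abs_Re_le_cmod)
  finally show ?thesis .
qed

lemma norm_Delta_scalar:
  "cmod (of_real eps^2 * s^2 - s) = cmod s * cmod (of_real eps^2 * s - 1)"
  unfolding norm_mult[symmetric] by (simp add: algebra_simps power2_eq_square)

lemma Delta_mult_vec: "Delta L eps s *v x = (of_real eps^2 * s^2 - s) *s x + charM L s *v x"
proof -
  have "(if P then c else 0) * z = (if P then c * z else 0)" for P and c z :: complex by simp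
  then show ?thesis
    by (simp add: vec_eq_iff matrix_vector_mult_def vector_scalar_mult_def Delta_def
        distrib_right sum.distrib)
qed

lemma Delta_line_lower_bound_on_compact:
  fixes L :: "(real \<Rightarrow> real^'n) \<Rightarrow> real^'n"
  assumes cont: "\<And>k j. continuous_on UNIV (\<lambda>y. charM L (Complex b y) $ k $ j)"
    and nonsingular: "\<And>eps s. eps \<in> {0..e} \<Longrightarrow> Re s = b \<Longrightarrow> det (Delta L eps s) \<noteq> 0"
    and "0 \<le> e" "0 \<le> R"
  obtains \<delta> where "\<delta> > 0"
    "\<And>eps y x. eps \<in> {0..e} \<Longrightarrow> \<bar>y\<bar> \<le> R \<Longrightarrow> \<delta> * norm x \<le> norm (Delta L eps (Complex b y) *v x)"
proof -
  define S where "S = {0..e} \<times> {-R..R} \<times> sphere (0 :: complex^'n) 1"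
  define F where "F p = norm (Delta L (fst p) (Complex b (fst (snd p))) *v snd (snd p))"
    for p :: "real \<times> real \<times> (complex^'n)"
  have "compact S" unfolding S_def by (intro compact_Times compact_sphere compact_Icc)
  moreover have "S \<noteq> {}"
    using vector_choose_size[of 1, where 'a = "complex^'n"] assms(3,4) unfolding S_def by auto
  moreover have "continuous_on S F"
    unfolding F_def Delta_mult_vec unfolding vector_scalar_mult_def matrix_vector_mult_def
    by (intro continuous_intros continuous_on_compose2[OF cont, where f = "\<lambda>p. fst (snd p)"]) auto
  ultimately obtain p0 where "p0 \<in> S" and min: "\<And>p. p \<in> S \<Longrightarrow> F p0 \<le> F p"
    using continuous_attains_inf by metis
  obtain eps' y' x' where p0: "p0 = (eps', y', x')" by (metis prod.exhaust)
  with \<open>p0 \<in> S\<close> have "eps' \<in> {0..e}" "x' \<noteq> 0" unfolding S_def by auto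
  then have "Delta L eps' (Complex b y') *v x' \<noteq> 0"
    using nonsingular[of eps' "Complex b y'"] inj_matrix_vector_mult invertible_det_nz
    by (metis complex.sel(1) inj_eq matrix_vector_mult_0_right)
  then have F0: "F p0 > 0" unfolding F_def p0 by simp
  show ?thesis
  proof (rule that[OF F0])
    fix eps y and x :: "complex^'n"
    assume "eps \<in> {0..e}" "\<bar>y\<bar> \<le> R"
    show "F p0 * norm x \<le> norm (Delta L eps (Complex b y) *v x)"
    proof (cases "x = 0")
      case False
      then have "(eps, y, (1 / norm x) *\<^sub>R x) \<in> S"
        unfolding S_def using \<open>eps \<in> {0..e}\<close> \<open>\<bar>y\<bar> \<le> R\<close> by (auto simp: abs_le_iff)
      then have "F p0 \<le> F (eps, y, (1 / norm x) *\<^sub>R x)" by (rule min)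
      also have "\<dots> = norm (Delta L eps (Complex b y) *v x) / norm x"
        unfolding F_def by (simp add: linear_cmul[OF matrix_vector_mul_linear])
      finally show ?thesis using False by (simp add: field_simps)
    qed simp
  qed
qed

lemma Delta_lower_bound_if_scalar_dominates:
  assumes "\<And>x. norm (charM L s *v x) \<le> K * norm x"
    and "2 * K \<le> cmod (of_real eps^2 * s^2 - s)"
  shows "cmod (of_real eps^2 * s^2 - s) * norm x \<le> 2 * norm (Delta L eps s *v x)"
proof -
  let ?a = "(of_real eps^2 * s^2 - s) *s x" and ?m = "charM L s *v x"
  have "cmod (of_real eps^2 * s^2 - s) * norm x = norm ?a"
    by (simp only: norm_vector_scalar_mult)
  also have "\<dots> \<le> norm (?a + ?m) + norm ?m"
    using norm_triangle_ineq4[of "?a + ?m" ?m] by simp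
  also have "\<dots> \<le> norm (Delta L eps s *v x) + K * norm x"
    using assms(1) unfolding Delta_mult_vec by simp
  finally show ?thesis
    using mult_right_mono[OF assms(2) norm_ge_zero[of x]] by simp
qed

lemma Delta_lower_bound_if_norm_le:
  assumes "\<delta> > 0" "R \<ge> 0" "cmod s \<le> R" "eps^2 \<le> 1"
    and "\<And>x. \<delta> * norm x \<le> norm (Delta L eps s *v x)"
  shows "cmod (of_real eps^2 * s^2 - s) * norm x \<le> R * (R + 1) / \<delta> * norm (Delta L eps s *v x)"
proof -
  have "cmod (of_real eps^2 * s - 1) \<le> cmod (of_real eps^2 * s) + 1"
    by (metis norm_one norm_triangle_ineq4)
  also have "\<dots> \<le> R + 1"
    using mult_mono[OF assms(4) assms(3)] by (simp add: norm_mult norm_power)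
  finally have scalar_le: "cmod (of_real eps^2 * s^2 - s) \<le> R * (R + 1)"
    unfolding norm_Delta_scalar using assms(2,3) by (intro mult_mono) auto
  have "cmod (of_real eps^2 * s^2 - s) * norm x \<le> R * (R + 1) / \<delta> * (\<delta> * norm x)"
    using mult_right_mono[OF scalar_le norm_ge_zero[of x]] assms(1) by simp
  also have "\<dots> \<le> R * (R + 1) / \<delta> * norm (Delta L eps s *v x)"
    using assms by (intro mult_left_mono) auto
  finally show ?thesis .
qed

lemma Delta_line_lower_bound:
  fixes L :: "(real \<Rightarrow> real^'n) \<Rightarrow> real^'n"
  assumes "K \<ge> 0" and bounded: "\<And>s x. Re s = b \<Longrightarrow> norm (charM L s *v x) \<le> K * norm x"
    and cont: "\<And>k j. continuous_on UNIV (\<lambda>y. charM L (Complex b y) $ k $ j)"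
    and nonsingular: "\<And>eps s. eps \<in> {0..e} \<Longrightarrow> Re s = b \<Longrightarrow> det (Delta L eps s) \<noteq> 0"
    and e: "0 \<le> e" "e \<le> 1" "e^2 * b \<le> 1/2"
  obtains B where "B > 0"
    "\<And>eps s x. eps \<in> {0..e} \<Longrightarrow> Re s = b \<Longrightarrow>
       cmod (of_real eps^2 * s^2 - s) * norm x \<le> B * norm (Delta L eps s *v x)"
proof -
  define R where "R = 4 * K + 1"
  have R: "R > 0" unfolding R_def using \<open>K \<ge> 0\<close> by simp
  obtain \<delta> where \<delta>: "\<delta> > 0" and compact_bound: "\<And>eps y x. eps \<in> {0..e} \<Longrightarrow> \<bar>y\<bar> \<le> R \<Longrightarrow>
      \<delta> * norm x \<le> norm (Delta L eps (Complex b y) *v x)"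
    using Delta_line_lower_bound_on_compact[OF cont nonsingular e(1) less_imp_le[OF R]] by blast
  define B where "B = max 2 (R * (R + 1) / \<delta>)"
  have "cmod (of_real eps^2 * s^2 - s) * norm x \<le> B * norm (Delta L eps s *v x)"
    if eps: "eps \<in> {0..e}" and s: "Re s = b" for eps s x
  proof (cases "R \<le> cmod s")
    case True
    have "1/2 \<le> cmod (of_real eps^2 * s - 1)"
      using eps s e(3) by (intro norm_eps_sq_mult_minus_one_ge[of _ e]) auto
    then have "R * (1/2) \<le> cmod (of_real eps^2 * s^2 - s)"
      unfolding norm_Delta_scalar using True by (intro mult_mono) auto
    then have "2 * K \<le> cmod (of_real eps^2 * s^2 - s)"
      unfolding R_def by (simp add: algebra_simps)
    then have "cmod (of_real eps^2 * s^2 - s) * norm x \<le> 2 * norm (Delta L eps s *v x)"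
      by (rule Delta_lower_bound_if_scalar_dominates[OF bounded[OF s]])
    also have "\<dots> \<le> B * norm (Delta L eps s *v x)"
      unfolding B_def by (intro mult_right_mono) auto
    finally show ?thesis .
  next
    case False
    have "eps^2 \<le> 1" using eps e(2) by (simp add: power_le_one)
    have "\<bar>Im s\<bar> \<le> R" using False abs_Im_le_cmod[of s] by simp
    then have "\<delta> * norm x \<le> norm (Delta L eps s *v x)" for x
      using compact_bound[OF eps, of "Im s"] s complex.collapse[of s] by simp
    then have "cmod (of_real eps^2 * s^2 - s) * norm x \<le> R * (R + 1) / \<delta> * norm (Delta L eps s *v x)"
      using \<delta> R False \<open>eps^2 \<le> 1\<close> by (intro Delta_lower_bound_if_norm_le) auto
    also have "\<dots> \<le> B * norm (Delta L eps s *v x)"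
      unfolding B_def by (intro mult_right_mono) auto
    finally show ?thesis .
  qed
  moreover have "B > 0" unfolding B_def by simp
  ultimately show ?thesis using that by blast
qed

lemma scaled_mnorm_inv_Delta_le:
  fixes L :: "(real \<Rightarrow> real^'n) \<Rightarrow> real^'n"
  assumes "det (Delta L eps s) \<noteq> 0" "B \<ge> 0"
    and q: "1/2 \<le> cmod (of_real eps^2 * s - 1)"
    and Delta_bound: "\<And>x. cmod (of_real eps^2 * s^2 - s) * norm x \<le> B * norm (Delta L eps s *v x)"
  shows "cmod s * mnorm (matrix_inv (Delta L eps s)) \<le> 2 * B"
proof (rule scaled_mnorm_matrix_inv_le)
  show "invertible (Delta L eps s)" using assms(1) by (simp add: invertible_det_nz)
  fix x :: "complex^'n"
  have "cmod s * norm x \<le> 2 * (cmod s * cmod (of_real eps^2 * s - 1)) * norm x"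
    using mult_left_mono[OF q, of "cmod s"] by (intro mult_right_mono) auto
  also have "\<dots> = 2 * (cmod (of_real eps^2 * s^2 - s) * norm x)"
    by (simp add: norm_Delta_scalar)
  also have "\<dots> \<le> 2 * (B * norm (Delta L eps s *v x))"
    using Delta_bound by simp
  finally show "cmod s * norm x \<le> 2 * B * norm (Delta L eps s *v x)" by simp
qed (use assms in auto)

section \<open>Block elimination for \<open>D\<^sub>\<epsilon>\<close>\<close>

lemma Dmat_mult_vec_fst_block:
  "fst_block (Dmat L eps s *v w) = s *s fst_block w - snd_block w"
proof -
  have "(if P then c else 0) * z = (if P then c * z else 0)" for P and c z :: complex by simp
  then show ?thesis
    by (simp add: vec_eq_iff fst_block_def snd_block_def vector_scalar_mult_def
        matrix_vector_mult_def sum_UNIV_Plus Dmat_def)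
qed

lemma Dmat_mult_vec_snd_block:
  "snd_block (Dmat L eps s *v w) =
     (1 / of_real eps^2) *s (charM L s *v fst_block w) + (s - 1 / of_real eps^2) *s snd_block w"
proof -
  have "(if P then c else 0) * z = (if P then c * z else 0)" for P and c z :: complex by simp
  then show ?thesis
    by (simp add: vec_eq_iff fst_block_def snd_block_def vector_scalar_mult_def
        matrix_vector_mult_def sum_UNIV_Plus Dmat_def sum_divide_distrib)
qed

lemma Delta_mult_fst_block:
  assumes "eps \<noteq> 0"
  shows "Delta L eps s *v fst_block w =
    of_real eps^2 *s snd_block (Dmat L eps s *v w) + (of_real eps^2 * s - 1) *s fst_block (Dmat L eps s *v w)"
  using assms
  by (simp add: Delta_mult_vec Dmat_mult_vec_fst_block Dmat_mult_vec_snd_block vec_eq_iff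
      vector_scalar_mult_def field_simps power2_eq_square)

lemma Delta_mult_snd_block:
  assumes "eps \<noteq> 0"
  shows "Delta L eps s *v snd_block w =
    (s * of_real eps^2) *s snd_block (Dmat L eps s *v w) - charM L s *v fst_block (Dmat L eps s *v w)"
  unfolding Delta_mult_vec Dmat_mult_vec_fst_block Dmat_mult_vec_snd_block
    matrix_vector_mult_diff_distrib vector_scalar_commute
  using assms by (simp add: vec_eq_iff vector_scalar_mult_def field_simps power2_eq_square)

lemma norm_Delta_mult_fst_block_le:
  assumes "eps \<noteq> 0"
  shows "norm (Delta L eps s *v fst_block w) \<le>
    eps^2 * norm (snd_block (Dmat L eps s *v w)) + cmod (of_real eps^2 * s - 1) * norm (fst_block (Dmat L eps s *v w))"
  unfolding Delta_mult_fst_block[OF assms]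
  by (rule order_trans[OF norm_vector_scalar_mult_add_le]) (simp add: norm_power)

lemma norm_Delta_mult_snd_block_le:
  assumes "eps \<noteq> 0" "\<And>x. norm (charM L s *v x) \<le> K * norm x"
  shows "norm (Delta L eps s *v snd_block w) \<le>
    cmod s * eps^2 * norm (snd_block (Dmat L eps s *v w)) + K * norm (fst_block (Dmat L eps s *v w))"
  unfolding Delta_mult_snd_block[OF assms(1)]
  using norm_triangle_ineq4[of "(s * of_real eps^2) *s snd_block (Dmat L eps s *v w)"
      "charM L s *v fst_block (Dmat L eps s *v w)"] assms(2)[of "fst_block (Dmat L eps s *v w)"]
  by (simp add: norm_vector_scalar_mult norm_mult norm_power)

lemma Dmat_fst_block_bound:
  fixes L :: "(real \<Rightarrow> real^'n) \<Rightarrow> real^'n"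
  assumes "B \<ge> 0"
    and Delta_bound: "\<And>x. cmod (of_real eps^2 * s^2 - s) * norm x \<le> B * norm (Delta L eps s *v x)"
    and eps: "0 < eps" "eps \<le> 1" and q: "1/2 \<le> cmod (of_real eps^2 * s - 1)"
  shows "cmod s * norm (fst_block w) \<le> 3 * B * norm (Dmat L eps s *v w)"
proof -
  define q where "q = cmod (of_real eps^2 * s - 1)"
  define nD where "nD = norm (Dmat L eps s *v w)"
  have "q > 0" using q unfolding q_def by linarith
  have "eps^2 + q \<le> 3 * q" using eps q power_le_one[of eps 2] unfolding q_def by linarith
  have "q * (cmod s * norm (fst_block w)) \<le> B * norm (Delta L eps s *v fst_block w)"
    using Delta_bound[of "fst_block w"] unfolding norm_Delta_scalar q_def by (simp add: mult_ac)
  also have "\<dots> \<le> B * (eps^2 * nD + q * nD)"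
    unfolding nD_def q_def using eps(1) \<open>B \<ge> 0\<close>
    by (intro mult_left_mono order_trans[OF norm_Delta_mult_fst_block_le] add_mono mult_left_mono
        norm_fst_block_le norm_snd_block_le) auto
  also have "\<dots> \<le> q * (3 * B * nD)"
    using mult_right_mono[OF \<open>eps^2 + q \<le> 3 * q\<close>, of "B * nD"] \<open>B \<ge> 0\<close>
    unfolding nD_def by (simp add: algebra_simps)
  finally show ?thesis using \<open>q > 0\<close> unfolding nD_def by simp
qed

lemma Dmat_snd_block_bound:
  fixes L :: "(real \<Rightarrow> real^'n) \<Rightarrow> real^'n"
  assumes "B \<ge> 0" "K \<ge> 0"
    and Delta_bound: "\<And>x. cmod (of_real eps^2 * s^2 - s) * norm x \<le> B * norm (Delta L eps s *v x)"
    and bounded: "\<And>x. norm (charM L s *v x) \<le> K * norm x"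
    and eps: "0 < eps" and q: "1/2 \<le> cmod (of_real eps^2 * s - 1)"
  shows "cmod s * norm (snd_block w) \<le> B * (3 + 2 * K) * norm (Dmat L eps s *v w)"
proof -
  define q where "q = cmod (of_real eps^2 * s - 1)"
  define nD where "nD = norm (Dmat L eps s *v w)"
  have "q > 0" using q unfolding q_def by linarith
  have "cmod s * eps^2 \<le> 3 * q"
  proof -
    have "cmod s * eps^2 = cmod (of_real eps^2 * s - 1 + 1)" by (simp add: norm_mult norm_power)
    also have "\<dots> \<le> q + 1" unfolding q_def by (rule order_trans[OF norm_triangle_ineq]) simp
    finally show ?thesis using q unfolding q_def by linarith
  qed
  moreover have "K \<le> 2 * q * K"
    using mult_right_mono[of 1 "2 * q" K] q \<open>K \<ge> 0\<close> unfolding q_def by simp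
  ultimately have "cmod s * eps^2 + K \<le> q * (3 + 2 * K)" by (simp add: algebra_simps)
  have "q * (cmod s * norm (snd_block w)) \<le> B * norm (Delta L eps s *v snd_block w)"
    using Delta_bound[of "snd_block w"] unfolding norm_Delta_scalar q_def by (simp add: mult_ac)
  also have "\<dots> \<le> B * (cmod s * eps^2 * nD + K * nD)"
    unfolding nD_def using eps \<open>B \<ge> 0\<close> \<open>K \<ge> 0\<close>
    by (intro mult_left_mono order_trans[OF norm_Delta_mult_snd_block_le[OF _ bounded]] add_mono
        mult_left_mono norm_fst_block_le norm_snd_block_le) auto
  also have "\<dots> \<le> q * (B * (3 + 2 * K) * nD)"
    using mult_right_mono[OF \<open>cmod s * eps^2 + K \<le> q * (3 + 2 * K)\<close>, of "B * nD"] \<open>B \<ge> 0\<close>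
    unfolding nD_def by (simp add: algebra_simps)
  finally show ?thesis using \<open>q > 0\<close> unfolding nD_def by simp
qed

lemma Dmat_lower_bound:
  fixes L :: "(real \<Rightarrow> real^'n) \<Rightarrow> real^'n"
  assumes "B \<ge> 0" "K \<ge> 0"
    and "\<And>x. cmod (of_real eps^2 * s^2 - s) * norm x \<le> B * norm (Delta L eps s *v x)"
    and "\<And>x. norm (charM L s *v x) \<le> K * norm x"
    and "0 < eps" "eps \<le> 1" "1/2 \<le> cmod (of_real eps^2 * s - 1)"
  shows "cmod s * norm w \<le> B * (6 + 2 * K) * norm (Dmat L eps s *v w)"
proof -
  have "cmod s * norm w \<le> cmod s * norm (fst_block w) + cmod s * norm (snd_block w)"
    using mult_left_mono[OF norm_le_norm_blocks[of w], of "cmod s"] by (simp add: algebra_simps)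
  also have "\<dots> \<le> 3 * B * norm (Dmat L eps s *v w) + B * (3 + 2 * K) * norm (Dmat L eps s *v w)"
    using assms by (intro add_mono Dmat_fst_block_bound Dmat_snd_block_bound)
  finally show ?thesis by (simp add: algebra_simps)
qed

lemma scaled_mnorm_inv_Dmat_le:
  fixes L :: "(real \<Rightarrow> real^'n) \<Rightarrow> real^'n"
  assumes "B > 0" "K \<ge> 0"
    and "\<And>x. cmod (of_real eps^2 * s^2 - s) * norm x \<le> B * norm (Delta L eps s *v x)"
    and "\<And>x. norm (charM L s *v x) \<le> K * norm x"
    and "0 < eps" "eps \<le> 1" "1/2 \<le> cmod (of_real eps^2 * s - 1)"
  shows "cmod s * mnorm (matrix_inv (Dmat L eps s)) \<le> B * (6 + 2 * K)"
proof (cases "s = 0")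
  case False
  have lower: "cmod s * norm w \<le> B * (6 + 2 * K) * norm (Dmat L eps s *v w)" for w
    using assms by (intro Dmat_lower_bound) auto
  have BK: "B * (6 + 2 * K) > 0" using assms(1,2) by simp
  have "invertible (Dmat L eps s)"
  proof (rule invertible_if_norm_lower_bound)
    show "cmod s / (B * (6 + 2 * K)) > 0" using False BK by simp
    show "cmod s / (B * (6 + 2 * K)) * norm w \<le> norm (Dmat L eps s *v w)" for w
      using lower[of w] BK by (simp add: field_simps)
  qed
  then show ?thesis
    using lower BK by (intro scaled_mnorm_matrix_inv_le) auto
qed (use assms in simp)

theorem lemma4p2:
  fixes tau :: real and L :: "(real \<Rightarrow> real^'n) \<Rightarrow> real^'n" and b eps0 :: real
  assumes "tau > 0" and "delay_operator tau L"
    and "0 < eps0" and "eps0 < 1"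
    and "\<forall>eps\<in>{0..eps0}. \<forall>y::real. det (Delta L eps (Complex b y)) \<noteq> 0"
  shows "\<exists>eps1\<in>{0<..eps0}.
     bdd_above {cmod s * mnorm (matrix_inv (Delta L eps s)) | eps s. eps \<in> {0..eps1} \<and> Re s = b} \<and>
     bdd_above {cmod s * mnorm (matrix_inv (Dmat L eps s)) | eps s. eps \<in> {0<..eps1} \<and> Re s = b}"
proof -
  obtain e where e: "0 < e" "e \<le> eps0" "e^2 * b \<le> 1/2"
    using small_eps_exists[OF assms(3)] by blast
  have "e \<le> 1" using e(2) assms(4) by simp
  have nonsingular: "det (Delta L eps s) \<noteq> 0" if "eps \<in> {0..e}" "Re s = b" for eps s
    using assms(5)[rule_format, of eps "Im s"] that e(2) complex.collapse[of s] by auto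
  obtain K where K: "K \<ge> 0" "\<And>s x. Re s = b \<Longrightarrow> norm (charM L s *v x) \<le> K * norm x"
    and cont: "\<And>k j. continuous_on UNIV (\<lambda>y. charM L (Complex b y) $ k $ j)"
    using charM_line_bounded_continuous[OF assms(2,1)] by blast
  obtain B where B: "B > 0" and Delta_bound: "\<And>eps s x. eps \<in> {0..e} \<Longrightarrow> Re s = b \<Longrightarrow>
      cmod (of_real eps^2 * s^2 - s) * norm x \<le> B * norm (Delta L eps s *v x)"
    using Delta_line_lower_bound[OF K cont nonsingular less_imp_le[OF e(1)] \<open>e \<le> 1\<close> e(3)] by blast
  have q: "1/2 \<le> cmod (of_real eps^2 * s - 1)" if "eps \<in> {0..e}" "Re s = b" for eps s
    using that e(3) by (intro norm_eps_sq_mult_minus_one_ge[of _ e]) auto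
  have "cmod s * mnorm (matrix_inv (Delta L eps s)) \<le> 2 * B" if "eps \<in> {0..e}" "Re s = b" for eps s
    using that B by (intro scaled_mnorm_inv_Delta_le nonsingular q Delta_bound) auto
  moreover have "cmod s * mnorm (matrix_inv (Dmat L eps s)) \<le> B * (6 + 2 * K)"
    if "eps \<in> {0<..e}" "Re s = b" for eps s
    using that \<open>e \<le> 1\<close> B K by (intro scaled_mnorm_inv_Dmat_le Delta_bound q) auto
  ultimately show ?thesis
    using e by (intro bexI[of _ e] conjI bdd_aboveI) auto
qed

end
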